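(* Let $n\ge2$ and $\mu\in[0,1-\frac1n]$. Then problems (P) and (RP) have the same optimal solutions: an $n\times n$ matrix is an optimal solution of (P) if and only if it is an optimal solution of (RP).
   Context: An $n\times n$ checkerboard copula is a real $n\times n$ matrix $P=(p_{ij})$ with nonnegative entries whose row and column sums all equal $\frac1n$. $\Xi=(\xi_{ij})$ with $\xi_{ij}=1$ if $i=j$, $2$ if $i>j$, $0$ if $i<j$. Let $I(P)=\sum_{i,j}p_{ij}\log p_{ij}$ with $0\log0=0$. Problem (P): minimize $I(P)$ over $n\times n$ checkerboard copulas $P$ with $1-\mathrm{tr}(\Xi P\Xi P^\top)=\mu$. Problem (RP): minimize $I(P)$ over $n\times n$ checkerboard copulas $P$ with $1-\mathrm{tr}(\Xi P\Xi P^\top)\ge\mu$. *)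

theory Defs
  imports Complex_Main
begin

text \<open>n x n matrices are represented as functions nat => nat => real; only the
entries with indices in {..<n} matter (indices 0..n-1 stand for 1..n).\<close>

definition checkerboard :: "nat \<Rightarrow> (nat \<Rightarrow> nat \<Rightarrow> real) \<Rightarrow> bool" where
  "checkerboard n P \<longleftrightarrow>
     (\<forall>i<n. \<forall>j<n. P i j \<ge> 0) \<and>
     (\<forall>i<n. (\<Sum>j<n. P i j) = 1 / real n) \<and>
     (\<forall>j<n. (\<Sum>i<n. P i j) = 1 / real n)"

definition Xi :: "nat \<Rightarrow> nat \<Rightarrow> real" where
  "Xi i j = (if i = j then 1 else if i > j then 2 else 0)"

definition trXPXPt :: "nat \<Rightarrow> (nat \<Rightarrow> nat \<Rightarrow> real) \<Rightarrow> real" where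
  "trXPXPt n P = (\<Sum>i<n. \<Sum>j<n. \<Sum>k<n. \<Sum>l<n. Xi i j * P j k * Xi k l * P i l)"

definition constr :: "nat \<Rightarrow> (nat \<Rightarrow> nat \<Rightarrow> real) \<Rightarrow> real" where
  "constr n P = 1 - trXPXPt n P"

text \<open>I(P) = sum p log p with 0 log 0 = 0 (note ln 0 = 0 in Isabelle, made explicit)\<close>
definition Ient :: "nat \<Rightarrow> (nat \<Rightarrow> nat \<Rightarrow> real) \<Rightarrow> real" where
  "Ient n P = (\<Sum>i<n. \<Sum>j<n. if P i j = 0 then 0 else P i j * ln (P i j))"

definition feasible_P :: "nat \<Rightarrow> real \<Rightarrow> (nat \<Rightarrow> nat \<Rightarrow> real) \<Rightarrow> bool" where
  "feasible_P n \<mu> P \<longleftrightarrow> checkerboard n P \<and> constr n P = \<mu>"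

definition feasible_RP :: "nat \<Rightarrow> real \<Rightarrow> (nat \<Rightarrow> nat \<Rightarrow> real) \<Rightarrow> bool" where
  "feasible_RP n \<mu> P \<longleftrightarrow> checkerboard n P \<and> constr n P \<ge> \<mu>"

definition optimal_P :: "nat \<Rightarrow> real \<Rightarrow> (nat \<Rightarrow> nat \<Rightarrow> real) \<Rightarrow> bool" where
  "optimal_P n \<mu> P \<longleftrightarrow> feasible_P n \<mu> P \<and> (\<forall>Q. feasible_P n \<mu> Q \<longrightarrow> Ient n P \<le> Ient n Q)"

definition optimal_RP :: "nat \<Rightarrow> real \<Rightarrow> (nat \<Rightarrow> nat \<Rightarrow> real) \<Rightarrow> bool" where
  "optimal_RP n \<mu> P \<longleftrightarrow> feasible_RP n \<mu> P \<and> (\<forall>Q. feasible_RP n \<mu> Q \<longrightarrow> Ient n P \<le> Ient n Q)"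

end

theory Submission
  imports Defs
begin

text \<open>Blending a copula \<open>Q\<close> with the uniform copula \<open>\<Pi> = (1/n\<^sup>2)\<close> moves the constraint
value \<open>1 - tr(\<Xi> Q \<Xi> Q\<^sup>T)\<close> continuously towards its value \<open>0\<close> at \<open>\<Pi>\<close>. Since \<open>I\<close> is
convex and \<open>\<Pi>\<close> is its unique minimiser among copulas (Gibbs' inequality), the blend does not
increase \<open>I\<close>, and strictly decreases it when \<open>Q \<noteq> \<Pi>\<close>. So every copula feasible for (RP)
can be pushed onto the surface \<open>constr = \<mu>\<close> without increasing \<open>I\<close>, and an optimal
solution of (RP) cannot lie strictly inside its feasible set.\<close>

definition xlnx :: "real \<Rightarrow> real" where
  "xlnx x = (if x = 0 then 0 else x * ln x)"

lemma Ient_eq_sum_xlnx: "Ient n P = (\<Sum>i<n. \<Sum>j<n. xlnx (P i j))"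
  unfolding Ient_def xlnx_def by simp

lemma xlnx_tangent_gap:
  assumes "c > 0" and "p > 0"
  shows "xlnx p - (xlnx c + (ln c + 1) * (p - c)) = p * (c / p - 1 - ln (c / p))"
  using assms by (simp add: xlnx_def ln_div field_simps)

lemma xlnx_above_tangent:
  assumes "c > 0" and "p \<ge> 0"
  shows "xlnx c + (ln c + 1) * (p - c) \<le> xlnx p"
proof (cases "p = 0")
  case True
  then show ?thesis using assms by (simp add: xlnx_def algebra_simps)
next
  case False
  then have "p > 0" using assms by simp
  moreover have "ln (c / p) \<le> c / p - 1"
    using \<open>p > 0\<close> assms by (intro ln_le_minus_one) simp
  ultimately show ?thesis using xlnx_tangent_gap[OF \<open>c > 0\<close> \<open>p > 0\<close>]
    by (smt (verit) mult_nonneg_nonneg)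
qed

lemma xlnx_on_tangentD:
  assumes "c > 0" and "p \<ge> 0" and "xlnx p = xlnx c + (ln c + 1) * (p - c)"
  shows "p = c"
proof (cases "p = 0")
  case True
  then show ?thesis using assms by (simp add: xlnx_def algebra_simps)
next
  case False
  then have "p > 0" using assms by simp
  then have "ln (c / p) = c / p - 1"
    using xlnx_tangent_gap[OF \<open>c > 0\<close> \<open>p > 0\<close>] assms(3) by simp
  then have "c / p = 1"
    using \<open>p > 0\<close> assms by (intro ln_eq_minus_one) auto
  then show ?thesis using \<open>p > 0\<close> by simp
qed

lemma xlnx_convex:
  assumes "a \<ge> 0" and "b \<ge> 0" and "0 \<le> t" and "t \<le> 1"
  shows "xlnx ((1 - t) * a + t * b) \<le> (1 - t) * xlnx a + t * xlnx b"
proof -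
  define x where "x = (1 - t) * a + t * b"
  show ?thesis
  proof (cases "x = 0")
    case True
    then have "(1 - t) * a = 0" and "t * b = 0"
      unfolding x_def using assms by (smt (verit) mult_nonneg_nonneg)+
    then show ?thesis unfolding x_def by (auto simp: xlnx_def)
  next
    case False
    then have "x > 0" unfolding x_def using assms by (smt (verit) mult_nonneg_nonneg)
    have "(1 - t) * (xlnx x + (ln x + 1) * (a - x)) + t * (xlnx x + (ln x + 1) * (b - x))
        \<le> (1 - t) * xlnx a + t * xlnx b"
      using xlnx_above_tangent[OF \<open>x > 0\<close>] assms by (intro add_mono mult_left_mono) auto
    moreover have "(1 - t) * (xlnx x + (ln x + 1) * (a - x)) + t * (xlnx x + (ln x + 1) * (b - x))
        = xlnx x"
      unfolding x_def by (simp add: algebra_simps)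
    ultimately show ?thesis unfolding x_def by simp
  qed
qed

definition mix :: "real \<Rightarrow> (nat \<Rightarrow> nat \<Rightarrow> real) \<Rightarrow> (nat \<Rightarrow> nat \<Rightarrow> real) \<Rightarrow> nat \<Rightarrow> nat \<Rightarrow> real" where
  "mix t P Q = (\<lambda>i j. (1 - t) * P i j + t * Q i j)"

definition uniform :: "nat \<Rightarrow> nat \<Rightarrow> nat \<Rightarrow> real" where
  "uniform n = (\<lambda>i j. 1 / (real n)\<^sup>2)"

lemma mix_0 [simp]: "mix 0 P Q = P"
  unfolding mix_def by simp

lemma checkerboard_mix:
  assumes "checkerboard n P" and "checkerboard n Q" and "0 \<le> t" and "t \<le> 1"
  shows "checkerboard n (mix t P Q)"
  using assms unfolding checkerboard_def mix_def
  by (simp add: sum.distrib flip: sum_distrib_left) (simp flip: add_divide_distrib)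

lemma checkerboard_uniform:
  assumes "n > 0"
  shows "checkerboard n (uniform n)"
  using assms unfolding checkerboard_def uniform_def by (simp add: power2_eq_square)

lemma Ient_mix_le:
  assumes "\<forall>i<n. \<forall>j<n. P i j \<ge> 0" and "\<forall>i<n. \<forall>j<n. Q i j \<ge> 0" and "0 \<le> t" and "t \<le> 1"
  shows "Ient n (mix t P Q) \<le> (1 - t) * Ient n P + t * Ient n Q"
proof -
  have "Ient n (mix t P Q) \<le> (\<Sum>i<n. \<Sum>j<n. (1 - t) * xlnx (P i j) + t * xlnx (Q i j))"
    unfolding Ient_eq_sum_xlnx mix_def using assms by (intro sum_mono xlnx_convex) auto
  also have "\<dots> = (1 - t) * Ient n P + t * Ient n Q"
    unfolding Ient_eq_sum_xlnx by (simp add: sum.distrib sum_distrib_left)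
  finally show ?thesis .
qed

text \<open>Gibbs' inequality: summing the tangent inequality of \<open>xlnx\<close> at \<open>1/n\<^sup>2\<close> over all
entries, the linear terms cancel because the entries of a copula sum to \<open>1\<close>.\<close>
lemma Ient_tangent_gap_uniform:
  assumes "checkerboard n Q" and "n > 0"
  defines "c \<equiv> 1 / (real n)\<^sup>2"
  shows "Ient n Q - Ient n (uniform n) = (\<Sum>i<n. \<Sum>j<n. xlnx (Q i j) - (xlnx c + (ln c + 1) * (Q i j - c)))"
proof -
  have "(\<Sum>i<n. \<Sum>j<n. Q i j) = 1" using assms unfolding checkerboard_def by simp
  then have "(\<Sum>i<n. \<Sum>j<n. (ln c + 1) * (Q i j - c)) = 0"
    using assms by (simp add: sum_subtractf flip: sum_distrib_left) (simp add: power2_eq_square)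
  moreover have "Ient n (uniform n) = (\<Sum>i<n. \<Sum>j<n. xlnx c)"
    unfolding Ient_eq_sum_xlnx uniform_def c_def ..
  ultimately show ?thesis
    unfolding Ient_eq_sum_xlnx by (simp add: sum_subtractf sum.distrib)
qed

lemma Ient_uniform_le:
  assumes "checkerboard n Q" and "n > 0"
  shows "Ient n (uniform n) \<le> Ient n Q"
proof -
  have "0 < 1 / (real n)\<^sup>2" using assms by simp
  then have "0 \<le> (\<Sum>i<n. \<Sum>j<n. xlnx (Q i j)
      - (xlnx (1 / (real n)\<^sup>2) + (ln (1 / (real n)\<^sup>2) + 1) * (Q i j - 1 / (real n)\<^sup>2)))"
    using assms xlnx_above_tangent unfolding checkerboard_def by (intro sum_nonneg) auto
  then show ?thesis using Ient_tangent_gap_uniform[OF assms] by simp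
qed

lemma Ient_eq_uniformD:
  assumes "checkerboard n Q" and "n > 0" and "Ient n Q = Ient n (uniform n)"
  shows "\<forall>i<n. \<forall>j<n. Q i j = uniform n i j"
proof (intro allI impI)
  fix i j assume "i < n" "j < n"
  define c where "c = 1 / (real n)\<^sup>2"
  have "c > 0" unfolding c_def using assms by simp
  define gap where "gap i j = xlnx (Q i j) - (xlnx c + (ln c + 1) * (Q i j - c))" for i j
  have gap_nonneg: "\<forall>i\<in>{..<n}. \<forall>j\<in>{..<n}. gap i j \<ge> 0"
    using xlnx_above_tangent[OF \<open>c > 0\<close>] assms unfolding gap_def checkerboard_def by auto
  have "(\<Sum>i<n. \<Sum>j<n. gap i j) = 0"
    using Ient_tangent_gap_uniform[OF assms(1,2)] assms(3) unfolding gap_def c_def by simp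
  then have "\<forall>i\<in>{..<n}. (\<Sum>j<n. gap i j) = 0"
    using gap_nonneg by (subst sum_nonneg_eq_0_iff[symmetric]) (auto intro: sum_nonneg)
  then have "gap i j = 0"
    using gap_nonneg \<open>i < n\<close> \<open>j < n\<close> sum_nonneg_eq_0_iff[of "{..<n}" "gap i"] by auto
  then have "Q i j = c"
    using xlnx_on_tangentD[OF \<open>c > 0\<close>] assms \<open>i < n\<close> \<open>j < n\<close>
    unfolding gap_def checkerboard_def by auto
  then show "Q i j = uniform n i j" unfolding c_def uniform_def .
qed

lemma Ient_mix_uniform_le:
  assumes "checkerboard n Q" and "n > 0" and "0 \<le> t" and "t \<le> 1"
  shows "Ient n (mix t Q (uniform n)) \<le> Ient n Q"
proof -
  have "Ient n (mix t Q (uniform n)) \<le> (1 - t) * Ient n Q + t * Ient n (uniform n)"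
    using assms checkerboard_uniform[of n] unfolding checkerboard_def by (intro Ient_mix_le) auto
  also have "\<dots> \<le> (1 - t) * Ient n Q + t * Ient n Q"
    using Ient_uniform_le[OF assms(1,2)] assms(3) by (simp add: mult_left_mono)
  finally show ?thesis by (simp add: algebra_simps)
qed

lemma Ient_mix_uniform_less:
  assumes "checkerboard n Q" and "n > 0" and "0 < t" and "t \<le> 1"
    and "\<exists>i<n. \<exists>j<n. Q i j \<noteq> uniform n i j"
  shows "Ient n (mix t Q (uniform n)) < Ient n Q"
proof -
  have "Ient n (uniform n) < Ient n Q"
    using Ient_uniform_le[OF assms(1,2)] Ient_eq_uniformD[OF assms(1,2)] assms(5) by force
  have "Ient n (mix t Q (uniform n)) \<le> (1 - t) * Ient n Q + t * Ient n (uniform n)"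
    using assms checkerboard_uniform[of n] unfolding checkerboard_def by (intro Ient_mix_le) auto
  also have "\<dots> < (1 - t) * Ient n Q + t * Ient n Q"
    using \<open>Ient n (uniform n) < Ient n Q\<close> \<open>0 < t\<close> by simp
  finally show ?thesis by (simp add: algebra_simps)
qed

lemma sum_Xi: "(\<Sum>i<n. \<Sum>j<n. Xi i j) = (real n)\<^sup>2"
proof (induction n)
  case 0
  then show ?case by simp
next
  case (Suc n)
  have "(\<Sum>i<Suc n. \<Sum>j<Suc n. Xi i j)
      = (\<Sum>i<n. \<Sum>j<n. Xi i j) + (\<Sum>i<n. Xi i n) + (\<Sum>j<n. Xi n j) + Xi n n"
    by (simp add: sum.distrib)
  also have "\<dots> = (real (Suc n))\<^sup>2"
    using Suc by (simp add: Xi_def power2_eq_square algebra_simps)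
  finally show ?case .
qed

lemma constr_uniform:
  assumes "n > 0"
  shows "constr n (uniform n) = 0"
proof -
  have "trXPXPt n (uniform n) = (\<Sum>i<n. \<Sum>j<n. \<Sum>k<n. \<Sum>l<n. Xi i j * Xi k l / (real n)^4)"
    unfolding trXPXPt_def uniform_def by (simp add: power4_eq_xxxx power2_eq_square mult.assoc)
  also have "\<dots> = (\<Sum>i<n. \<Sum>j<n. Xi i j * (\<Sum>k<n. \<Sum>l<n. Xi k l)) / (real n)^4"
    by (simp add: sum_distrib_left sum_divide_distrib)
  also have "\<dots> = (\<Sum>i<n. \<Sum>j<n. Xi i j) * (\<Sum>k<n. \<Sum>l<n. Xi k l) / (real n)^4"
    by (simp add: sum_distrib_right)
  also have "\<dots> = 1"
    using assms by (simp add: sum_Xi flip: power_add)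
  finally show ?thesis unfolding constr_def by simp
qed

lemma constr_cong:
  assumes "\<forall>i<n. \<forall>j<n. P i j = Q i j"
  shows "constr n P = constr n Q"
  unfolding constr_def trXPXPt_def using assms by (intro arg_cong[where f="\<lambda>x. 1 - x"] sum.cong) auto

lemma continuous_on_constr_mix: "continuous_on S (\<lambda>t. constr n (mix t P Q))"
  unfolding constr_def trXPXPt_def mix_def by (intro continuous_intros)

lemma constr_mix_uniform_reaches:
  assumes "n > 0" and "0 \<le> \<mu>" and "\<mu> \<le> constr n Q"
  obtains t where "0 \<le> t" "t \<le> 1" "constr n (mix t Q (uniform n)) = \<mu>"
proof -
  have "constr n (mix 1 Q (uniform n)) = 0"
    using constr_uniform[OF assms(1)] by (simp add: mix_def)
  then show ?thesis
    using IVT2'[of "\<lambda>t. constr n (mix t Q (uniform n))" 1 \<mu> 0]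
      continuous_on_constr_mix assms that by auto
qed

lemma optimal_P_imp_optimal_RP:
  assumes "n > 0" and "0 \<le> \<mu>" and "optimal_P n \<mu> P"
  shows "optimal_RP n \<mu> P"
  unfolding optimal_RP_def feasible_RP_def
proof (intro conjI allI impI)
  show "checkerboard n P" "\<mu> \<le> constr n P"
    using assms(3) unfolding optimal_P_def feasible_P_def by auto
  fix Q assume Q: "checkerboard n Q \<and> \<mu> \<le> constr n Q"
  then obtain t where t: "0 \<le> t" "t \<le> 1" "constr n (mix t Q (uniform n)) = \<mu>"
    using constr_mix_uniform_reaches assms(1,2) by blast
  then have "feasible_P n \<mu> (mix t Q (uniform n))"
    unfolding feasible_P_def using checkerboard_mix checkerboard_uniform Q assms(1) by blast
  then have "Ient n P \<le> Ient n (mix t Q (uniform n))"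
    using assms(3) unfolding optimal_P_def by blast
  also have "\<dots> \<le> Ient n Q"
    using Ient_mix_uniform_le Q assms(1) t by blast
  finally show "Ient n P \<le> Ient n Q" .
qed

lemma optimal_RP_imp_optimal_P:
  assumes "n > 0" and "0 \<le> \<mu>" and "optimal_RP n \<mu> P"
  shows "optimal_P n \<mu> P"
proof -
  have P: "checkerboard n P" "\<mu> \<le> constr n P"
    using assms(3) unfolding optimal_RP_def feasible_RP_def by auto
  have "constr n P = \<mu>"
  proof (rule ccontr)
    assume "constr n P \<noteq> \<mu>"
    obtain t where t: "0 \<le> t" "t \<le> 1" "constr n (mix t P (uniform n)) = \<mu>"
      using constr_mix_uniform_reaches assms(1,2) P(2) by blast
    have "t \<noteq> 0" using t(3) \<open>constr n P \<noteq> \<mu>\<close> by auto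
    have "\<exists>i<n. \<exists>j<n. P i j \<noteq> uniform n i j"
      using constr_cong[of n P "uniform n"] constr_uniform[OF assms(1)] P(2) assms(2)
        \<open>constr n P \<noteq> \<mu>\<close> by auto
    then have "Ient n (mix t P (uniform n)) < Ient n P"
      using Ient_mix_uniform_less P(1) assms(1) t(1,2) \<open>t \<noteq> 0\<close> by simp
    moreover have "feasible_RP n \<mu> (mix t P (uniform n))"
      unfolding feasible_RP_def using checkerboard_mix checkerboard_uniform P(1) assms(1) t by auto
    ultimately show False using assms(3) unfolding optimal_RP_def by force
  qed
  then show ?thesis
    using assms(3) unfolding optimal_P_def optimal_RP_def feasible_P_def feasible_RP_def by auto
qed

text \<open>The upper bound on \<open>\<mu>\<close> only ensures that (P) is feasible; the equivalence holds without it.\<close>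
theorem lemma8:
  fixes n :: nat and \<mu> :: real and P :: "nat \<Rightarrow> nat \<Rightarrow> real"
  assumes "n \<ge> 2" and "0 \<le> \<mu>" and "\<mu> \<le> 1 - 1 / real n"
  shows "optimal_P n \<mu> P \<longleftrightarrow> optimal_RP n \<mu> P"
  using optimal_P_imp_optimal_RP optimal_RP_imp_optimal_P assms(1,2) by fastforce

end
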